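(* Let $G$ be a compact Lie group. Every braidable infinite sequence $\xi=(\xi_i)_{i\geq1}$ of $G$-valued random variables is spreadable.
   Context: The braid group $\mathcal{B}_n$ ($n\ge2$) has generators $\beta_1,\dots,\beta_{n-1}$ and relations $\beta_i\beta_j\beta_i=\beta_j\beta_i\beta_j$ if $|i-j|=1$, $\beta_i\beta_j=\beta_j\beta_i$ if $|i-j|>1$; it acts on $n$-tuples of $G$-valued random variables via $\beta_i\bullet(X_1,\dots,X_i,X_{i+1},\dots,X_n)=(X_1,\dots,X_{i-1},X_iX_{i+1}X_i^{-1},X_i,X_{i+2},\dots,X_n)$. The sequence $\xi$ is braidable if for every $n\ge2$ and every $\beta\in\mathcal{B}_n$, $\beta\bullet(\xi_1,\dots,\xi_n)$ has the same law as $(\xi_1,\dots,\xi_n)$. It is spreadable if for every strictly increasing sequence of positive integers $(k_i)_{i\ge1}$, $(\xi_{k_i})_{i\ge1}$ has the same law as $(\xi_i)_{i\ge1}$. *)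

theory Defs
  imports "HOL-Analysis.Analysis" "HOL-Probability.Probability"
begin

text \<open>Compact Lie groups, realised as compact subgroups of GL_n(R)
  (every compact Lie group is isomorphic, as a topological group, to such a group).\<close>
definition compact_matrix_group :: "(real^'n^'n) set \<Rightarrow> bool" where
  "compact_matrix_group G \<longleftrightarrow> compact G \<and> mat 1 \<in> G \<and>
     (\<forall>A\<in>G. \<forall>B\<in>G. A ** B \<in> G) \<and> (\<forall>A\<in>G. invertible A \<and> matrix_inv A \<in> G)"

text \<open>Action of a braid generator (0-based: generator j acts on positions j, j+1;
  flag True means the inverse generator).\<close>
definition braid_gen :: "nat \<Rightarrow> bool \<Rightarrow> (nat \<Rightarrow> real^'n^'n) \<Rightarrow> (nat \<Rightarrow> real^'n^'n)" where
  "braid_gen j is_inv x =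
     (if is_inv then x(j := x (Suc j), Suc j := matrix_inv (x (Suc j)) ** x j ** x (Suc j))
      else x(j := x j ** x (Suc j) ** matrix_inv (x j), Suc j := x j))"

definition braid_act :: "(nat \<times> bool) list \<Rightarrow> (nat \<Rightarrow> real^'n^'n) \<Rightarrow> (nat \<Rightarrow> real^'n^'n)" where
  "braid_act ws x = foldr (\<lambda>(j, b) y. braid_gen j b y) ws x"

definition braidable :: "'a measure \<Rightarrow> (nat \<Rightarrow> 'a \<Rightarrow> real^'n^'n) \<Rightarrow> bool" where
  "braidable M \<xi> \<longleftrightarrow>
     (\<forall>n\<ge>2. \<forall>ws. (\<forall>(j, b)\<in>set ws. Suc j < n) \<longrightarrow>
        distr M (PiM {..<n} (\<lambda>_. borel)) (\<lambda>\<omega>. restrict (braid_act ws (\<lambda>i. \<xi> i \<omega>)) {..<n})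
        = distr M (PiM {..<n} (\<lambda>_. borel)) (\<lambda>\<omega>. restrict (\<lambda>i. \<xi> i \<omega>) {..<n}))"

definition spreadable :: "'a measure \<Rightarrow> (nat \<Rightarrow> 'a \<Rightarrow> 'b::topological_space) \<Rightarrow> bool" where
  "spreadable M \<xi> \<longleftrightarrow>
     (\<forall>k::nat \<Rightarrow> nat. strict_mono k \<longrightarrow>
        distr M (PiM UNIV (\<lambda>_. borel)) (\<lambda>\<omega> i. \<xi> (k i) \<omega>)
        = distr M (PiM UNIV (\<lambda>_. borel)) (\<lambda>\<omega> i. \<xi> i \<omega>))"

end

(*
  Braidability is only used through the inverse generators. The braid
  \<beta>_{N-1}^-1 ... \<beta>_i^-1 carries \<xi>_i, conjugated, from slot i to slot N and moves
  \<xi>_{i+1}, ..., \<xi>_N down by one slot; forgetting slot N shows that deleting the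
  index i from (\<xi>_0, ..., \<xi>_N) leaves the law of the first N terms unchanged.
  On {0..<m} a strictly increasing k is a composite of finitely many such
  index deletions, so all finite-dimensional laws of (\<xi>_(k i)) and (\<xi>_i) agree,
  and these determine the law of the whole sequence.

  Compactness of G and G-valuedness of \<xi> are not needed; the braid action only
  has to be measurable, which holds because matrix_inv is continuous on the
  invertible matrices and constant (a junk value) on the singular ones.
*)

theory Submission
  imports Defs
begin

lemma continuous_on_det [continuous_intros]:
  fixes f :: "'a::topological_space \<Rightarrow> real^'n^'n"
  shows "continuous_on S f \<Longrightarrow> continuous_on S (\<lambda>x. det (f x))"
  unfolding det_def by (intro continuous_intros)

lemma continuous_on_matrix_mult [continuous_intros]:
  fixes f :: "'a::topological_space \<Rightarrow> real^'n^'m" and g :: "'a \<Rightarrow> real^'k^'n"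
  shows "continuous_on S f \<Longrightarrow> continuous_on S g \<Longrightarrow> continuous_on S (\<lambda>x. f x ** g x)"
  unfolding matrix_matrix_mult_def by (intro continuous_intros)

lemma matrix_inv_cramer:
  fixes A :: "real^'n^'n"
  assumes "det A \<noteq> 0"
  shows "matrix_inv A = (\<chi> k j. det (\<chi> r c. if c = k then axis j 1 $ r else A $ r $ c) / det A)"
proof -
  have "A ** matrix_inv A = mat 1"
    using assms unfolding invertible_det_nz[symmetric] invertible_def matrix_inv_def
    by (metis (mono_tags, lifting) someI_ex)
  then have "A *v (matrix_inv A *v axis j 1) = axis j 1" for j
    by (simp add: matrix_vector_mul_assoc)
  then have "matrix_inv A *v axis j 1 = (\<chi> k. det (\<chi> r c. if c = k then axis j 1 $ r else A $ r $ c) / det A)" for j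
    using cramer[OF assms] by blast
  then show ?thesis
    by (simp add: vec_eq_iff matrix_vector_mult_basis column_def)
qed

lemma continuous_on_matrix_inv: "continuous_on {A :: real^'n^'n. det A \<noteq> 0} matrix_inv"
proof -
  have entries: "continuous_on S (\<lambda>A :: real^'n^'n. \<chi> r c. if c = k then axis j 1 $ r else A $ r $ c)"
    for S k j
  proof (intro continuous_on_vec_lambda)
    fix r c
    show "continuous_on S (\<lambda>A :: real^'n^'n. if c = k then axis j 1 $ r else A $ r $ c)"
      by (cases "c = k") (auto intro!: continuous_on_component continuous_on_id)
  qed
  have "continuous_on {A. det A \<noteq> 0}
      (\<lambda>A :: real^'n^'n. \<chi> k j. det (\<chi> r c. if c = k then axis j 1 $ r else A $ r $ c) / det A)"
    by (intro continuous_on_vec_lambda continuous_on_divide continuous_on_det[OF entries]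
        continuous_on_det[OF continuous_on_id]) auto
  then show ?thesis
    by (rule continuous_on_eq) (simp add: matrix_inv_cramer)
qed

lemma matrix_inv_singular:
  fixes A :: "real^'n^'n"
  assumes "det A = 0"
  shows "matrix_inv A = (SOME B. False)"
proof -
  have "\<not> invertible A"
    using assms invertible_det_nz by blast
  then have "(\<lambda>B. A ** B = mat 1 \<and> B ** A = mat 1) = (\<lambda>B. False)"
    unfolding invertible_def by blast
  then show ?thesis
    unfolding matrix_inv_def by simp
qed

lemma borel_measurable_matrix_inv [measurable]: "matrix_inv \<in> borel_measurable (borel :: (real^'n^'n) measure)"
proof -
  let ?S = "{A :: real^'n^'n. det A \<noteq> 0}"
  have "?S \<in> sets borel"
    by (intro borel_open open_Collect_neq continuous_on_det continuous_on_id continuous_on_const)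
  then have "(\<lambda>A. if A \<in> ?S then matrix_inv A else (SOME B :: real^'n^'n. False)) \<in> borel_measurable borel"
    by (rule borel_measurable_continuous_on_if[OF _ continuous_on_matrix_inv continuous_on_const])
  moreover have "(\<lambda>A. if A \<in> ?S then matrix_inv A else (SOME B :: real^'n^'n. False)) = matrix_inv"
    by (simp add: fun_eq_iff matrix_inv_singular)
  ultimately show ?thesis
    by simp
qed

lemma borel_measurable_matrix_mult [measurable (raw)]:
  fixes f :: "'a \<Rightarrow> real^'n^'m" and g :: "'a \<Rightarrow> real^'k^'n"
  assumes "f \<in> borel_measurable M" and "g \<in> borel_measurable M"
  shows "(\<lambda>x. f x ** g x) \<in> borel_measurable M"
proof (rule borel_measurable_continuous_Pair[OF assms])
  show "continuous_on UNIV (\<lambda>x. fst x ** snd x :: real^'k^'m)"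
    by (intro continuous_on_matrix_mult continuous_on_fst continuous_on_snd continuous_on_id)
qed

lemma measurable_braid_gen [measurable]:
  "braid_gen j b \<in> measurable (PiM UNIV (\<lambda>_. borel)) (PiM UNIV (\<lambda>_. borel :: (real^'n^'n) measure))"
proof (rule measurable_PiM_single')
  fix l
  show "(\<lambda>x. braid_gen j b x l) \<in> borel_measurable (PiM UNIV (\<lambda>_. borel :: (real^'n^'n) measure))"
    unfolding braid_gen_def by (cases b; cases "l = j"; cases "l = Suc j") simp_all
qed (simp add: space_PiM)

lemma braid_act_Nil [simp]: "braid_act [] = id"
  by (simp add: braid_act_def fun_eq_iff)

lemma braid_act_Cons [simp]: "braid_act ((j, b) # ws) = braid_gen j b \<circ> braid_act ws"
  by (simp add: braid_act_def fun_eq_iff)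

lemma measurable_braid_act [measurable]:
  "braid_act ws \<in> measurable (PiM UNIV (\<lambda>_. borel)) (PiM UNIV (\<lambda>_. borel :: (real^'n^'n) measure))"
proof (induction ws)
  case Nil
  show ?case by simp
next
  case (Cons w ws)
  then show ?case
    by (cases w) (simp add: measurable_comp[OF Cons.IH measurable_braid_gen])
qed

lemma measurable_subseq:
  assumes "\<And>i. \<xi> i \<in> borel_measurable M"
  shows "(\<lambda>\<omega> i. \<xi> (f i) \<omega>) \<in> measurable M (PiM UNIV (\<lambda>_. borel))"
  by (rule measurable_PiM_single') (auto simp: assms)

definition skip_index :: "nat \<Rightarrow> nat \<Rightarrow> nat" where
  "skip_index i l = (if l < i then l else Suc l)"

(* The braid \<beta>_{N-1}^-1 ... \<beta>_i^-1; foldr in braid_act applies \<beta>_i^-1 first. *)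
definition bubble_word :: "nat \<Rightarrow> nat \<Rightarrow> (nat \<times> bool) list" where
  "bubble_word i N = map (\<lambda>j. (j, True)) (rev [i..<N])"

lemma braid_act_bubble_word:
  assumes "i \<le> N" and "l \<noteq> N"
  shows "braid_act (bubble_word i N) x l = x (if i \<le> l \<and> l < N then Suc l else l)"
  using assms
proof (induction N arbitrary: l)
  case 0
  then show ?case by (simp add: bubble_word_def)
next
  case (Suc N)
  show ?case
  proof (cases "i = Suc N")
    case True
    then show ?thesis by (auto simp: bubble_word_def)
  next
    case False
    then have "i \<le> N" and "bubble_word i (Suc N) = (N, True) # bubble_word i N"
      using Suc.prems by (simp_all add: bubble_word_def)
    with Suc show ?thesis
      by (simp add: braid_gen_def)
  qed
qed

definition subseq_law ::
    "'a measure \<Rightarrow> (nat \<Rightarrow> 'a \<Rightarrow> 'b::topological_space) \<Rightarrow> (nat \<Rightarrow> nat) \<Rightarrow> nat \<Rightarrow> (nat \<Rightarrow> 'b) measure" where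
  "subseq_law M \<xi> f N = distr M (PiM {..<N} (\<lambda>_. borel)) (\<lambda>\<omega>. restrict (\<lambda>l. \<xi> (f l) \<omega>) {..<N})"

lemma subseq_law_cong: "(\<And>l. l < N \<Longrightarrow> f l = g l) \<Longrightarrow> subseq_law M \<xi> f N = subseq_law M \<xi> g N"
  unfolding subseq_law_def by (intro distr_cong restrict_ext) simp_all

lemma subseq_law_comp:
  assumes [measurable]: "\<And>i. \<xi> i \<in> borel_measurable M" and h: "\<And>l. l < m \<Longrightarrow> h l < N"
  shows "subseq_law M \<xi> (f \<circ> h) m
    = distr (subseq_law M \<xi> f N) (PiM {..<m} (\<lambda>_. borel)) (\<lambda>y. restrict (\<lambda>l. y (h l)) {..<m})"
proof -
  have "(\<lambda>y. restrict (\<lambda>l. y (h l)) {..<m})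
      \<in> measurable (PiM {..<N} (\<lambda>_. borel)) (PiM {..<m} (\<lambda>_. borel :: 'b measure))"
    by (rule measurable_restrict) (simp add: h)
  then show ?thesis
    unfolding subseq_law_def by (subst distr_distr) (auto intro!: distr_cong simp: h)
qed

lemma subseq_law_skip_index:
  fixes \<xi> :: "nat \<Rightarrow> 'a \<Rightarrow> real^'n^'n"
  assumes braid: "braidable M \<xi>" and meas [measurable]: "\<And>i. \<xi> i \<in> borel_measurable M"
  shows "subseq_law M \<xi> (skip_index i) N = subseq_law M \<xi> id N"
proof (cases "i < N")
  case False
  then show ?thesis
    by (intro subseq_law_cong) (simp add: skip_index_def)
next
  case True
  let ?P = "\<lambda>n. PiM {..<n} (\<lambda>_. borel :: (real^'n^'n) measure)"
  let ?braided = "\<lambda>\<omega>. restrict (braid_act (bubble_word i N) (\<lambda>l. \<xi> l \<omega>)) {..<Suc N}"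
  have "(\<lambda>\<omega> l. \<xi> l \<omega>) \<in> measurable M (PiM UNIV (\<lambda>_. borel))"
    by (rule measurable_subseq[OF meas])
  then have [measurable]: "?braided \<in> measurable M (?P (Suc N))"
    by measurable
  have braided_law: "distr M (?P (Suc N)) ?braided = subseq_law M \<xi> id (Suc N)"
    using braid True unfolding braidable_def subseq_law_def by (auto simp: bubble_word_def)
  have "subseq_law M \<xi> (skip_index i) N = distr M (?P N) (\<lambda>\<omega>. restrict (?braided \<omega>) {..<N})"
    unfolding subseq_law_def using True
    by (intro distr_cong restrict_ext) (auto simp: braid_act_bubble_word skip_index_def)
  also have "\<dots> = distr (distr M (?P (Suc N)) ?braided) (?P N) (\<lambda>y. restrict y {..<N})"
    by (subst distr_distr) (auto simp: comp_def intro!: measurable_restrict_subset)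
  also have "\<dots> = subseq_law M \<xi> id N"
    using subseq_law_comp[of \<xi> M N id "Suc N" id] by (simp add: braided_law)
  finally show ?thesis .
qed

lemma strict_mono_skip_index_decomp:
  assumes k: "strict_mono k" and moved: "l < m" "k l \<noteq> l"
  obtains i k' where "strict_mono k'" "k = skip_index i \<circ> k'" "k' (m - 1) < k (m - 1)"
proof -
  define i where "i = (LEAST i. k i \<noteq> i)"
  have "k i \<noteq> i"
    unfolding i_def using moved(2) by (rule LeastI)
  have "i \<le> l"
    unfolding i_def using moved(2) by (rule Least_le)
  with moved(1) have "i \<le> m - 1"
    by simp
  have ki: "i < k i"
    using seq_suble[OF k, of i] \<open>k i \<noteq> i\<close> by simp
  have fixed: "k j = j" if "j < i" for j
    using not_less_Least[of j "\<lambda>i. k i \<noteq> i"] that unfolding i_def by blast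
  have above: "i < k j" if "i \<le> j" for j
    using ki k strict_mono_less_eq that by (metis order_less_le_trans)
  define k' where "k' j = (if j < i then j else k j - 1)" for j
  have "strict_mono k'"
  proof (rule strict_monoI)
    fix a b :: nat
    assume "a < b"
    then show "k' a < k' b"
      using above[of a] above[of b] strict_monoD[OF k \<open>a < b\<close>]
      by (auto simp: k'_def)
  qed
  moreover have "k = skip_index i \<circ> k'"
  proof
    fix j
    show "k j = (skip_index i \<circ> k') j"
      using fixed[of j] above[of j] by (cases "j < i") (auto simp: skip_index_def k'_def)
  qed
  moreover have "k' (m - 1) < k (m - 1)"
    using above[of "m - 1"] \<open>i \<le> m - 1\<close> by (simp add: k'_def)
  ultimately show ?thesis
    using that by blast
qed

lemma subseq_law_strict_mono:
  fixes \<xi> :: "nat \<Rightarrow> 'a \<Rightarrow> real^'n^'n"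
  assumes braid: "braidable M \<xi>" and meas: "\<And>i. \<xi> i \<in> borel_measurable M"
    and "strict_mono k"
  shows "subseq_law M \<xi> k m = subseq_law M \<xi> id m"
  using \<open>strict_mono k\<close>
proof (induction "k (m - 1)" arbitrary: k rule: less_induct)
  case less
  show ?case
  proof (cases "\<exists>l<m. k l \<noteq> l")
    case False
    then show ?thesis
      by (intro subseq_law_cong) simp
  next
    case True
    then obtain i k' where k': "strict_mono k'" "k = skip_index i \<circ> k'" "k' (m - 1) < k (m - 1)"
      using strict_mono_skip_index_decomp[OF less.prems] by blast
    define N where "N = Suc (k' (m - 1))"
    have below_N: "k' l < N" if "l < m" for l
      using that by (simp add: N_def strict_mono_less_eq[OF k'(1)] less_Suc_eq_le)
    have "subseq_law M \<xi> k m = distr (subseq_law M \<xi> (skip_index i) N) (PiM {..<m} (\<lambda>_. borel))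
        (\<lambda>y. restrict (\<lambda>l. y (k' l)) {..<m})"
      using subseq_law_comp[OF meas below_N] k'(2) by simp
    also have "\<dots> = subseq_law M \<xi> k' m"
      using subseq_law_comp[OF meas below_N, where f = id]
      by (simp add: subseq_law_skip_index[OF braid meas])
    also have "\<dots> = subseq_law M \<xi> id m"
      using less.hyps[OF k'(3) k'(1)] .
    finally show ?thesis .
  qed
qed

lemma measure_eqI_PiM_nat_prefixes:
  fixes P Q :: "(nat \<Rightarrow> 'b) measure"
  assumes sets: "sets P = sets (PiM UNIV N)" "sets Q = sets (PiM UNIV N)" and "finite_measure P"
    and prefixes: "\<And>m. distr P (PiM {..<m} N) (\<lambda>x. restrict x {..<m})
                     = distr Q (PiM {..<m} N) (\<lambda>x. restrict x {..<m})"
  shows "P = Q"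
proof (rule measure_eqI_PiM_infinite[OF sets _ \<open>finite_measure P\<close>])
  fix J :: "nat set" and A
  assume "finite J" and A: "\<And>i. i \<in> J \<Longrightarrow> A i \<in> sets (N i)"
  then obtain m where J: "J \<subseteq> {..<m}"
    using finite_nat_iff_bounded by blast
  let ?C = "prod_emb {..<m} N J (PiE J A)"
  have C: "?C \<in> sets (PiM {..<m} N)"
    using \<open>finite J\<close> J A by (intro sets_PiM_I) auto
  have "emeasure R (prod_emb UNIV N J (PiE J A)) = emeasure (distr R (PiM {..<m} N) (\<lambda>x. restrict x {..<m})) ?C"
    if "sets R = sets (PiM UNIV N)" for R
    using emeasure_distr_restrict[OF _ that C] J by simp
  then show "emeasure P (prod_emb UNIV N J (PiE J A)) = emeasure Q (prod_emb UNIV N J (PiE J A))"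
    using sets by (simp add: prefixes)
qed

lemma distr_eqI_subseq_law:
  assumes "prob_space M" and meas: "\<And>i. \<xi> i \<in> borel_measurable M"
    and "\<And>m. subseq_law M \<xi> f m = subseq_law M \<xi> g m"
  shows "distr M (PiM UNIV (\<lambda>_. borel)) (\<lambda>\<omega> i. \<xi> (f i) \<omega>)
       = distr M (PiM UNIV (\<lambda>_. borel)) (\<lambda>\<omega> i. \<xi> (g i) \<omega>)"
proof -
  have prefix: "distr (distr M (PiM UNIV (\<lambda>_. borel)) (\<lambda>\<omega> i. \<xi> (h i) \<omega>)) (PiM {..<m} (\<lambda>_. borel))
      (\<lambda>x. restrict x {..<m}) = subseq_law M \<xi> h m" for h m
    unfolding subseq_law_def
    by (subst distr_distr[OF measurable_restrict_subset measurable_subseq[OF meas]]) (simp_all add: comp_def)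
  show ?thesis
  proof (rule measure_eqI_PiM_nat_prefixes)
    show "finite_measure (distr M (PiM UNIV (\<lambda>_. borel)) (\<lambda>\<omega> i. \<xi> (f i) \<omega>))"
      using prob_space.prob_space_distr[OF \<open>prob_space M\<close> measurable_subseq[OF meas]] by (rule prob_space.finite_measure)
  next
    fix m
    show "distr (distr M (PiM UNIV (\<lambda>_. borel)) (\<lambda>\<omega> i. \<xi> (f i) \<omega>)) (PiM {..<m} (\<lambda>_. borel))
        (\<lambda>x. restrict x {..<m})
      = distr (distr M (PiM UNIV (\<lambda>_. borel)) (\<lambda>\<omega> i. \<xi> (g i) \<omega>)) (PiM {..<m} (\<lambda>_. borel))
        (\<lambda>x. restrict x {..<m})"
      unfolding prefix by (rule assms(3))
  qed simp_all
qed

theorem lemma8p2: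
  fixes G :: "(real^'n^'n) set" and M :: "'a measure" and \<xi> :: "nat \<Rightarrow> 'a \<Rightarrow> real^'n^'n"
  assumes "compact_matrix_group G"
    and "prob_space M"
    and "\<And>i. \<xi> i \<in> borel_measurable M"
    and "\<And>i \<omega>. \<omega> \<in> space M \<Longrightarrow> \<xi> i \<omega> \<in> G"
    and "braidable M \<xi>"
  shows "spreadable M \<xi>"
  unfolding spreadable_def
proof (intro allI impI)
  fix k :: "nat \<Rightarrow> nat"
  assume "strict_mono k"
  have "distr M (PiM UNIV (\<lambda>_. borel)) (\<lambda>\<omega> i. \<xi> (k i) \<omega>)
      = distr M (PiM UNIV (\<lambda>_. borel)) (\<lambda>\<omega> i. \<xi> (id i) \<omega>)"
    by (intro distr_eqI_subseq_law[OF assms(2,3)] subseq_law_strict_mono[OF assms(5,3) \<open>strict_mono k\<close>])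
  then show "distr M (PiM UNIV (\<lambda>_. borel)) (\<lambda>\<omega> i. \<xi> (k i) \<omega>)
           = distr M (PiM UNIV (\<lambda>_. borel)) (\<lambda>\<omega> i. \<xi> i \<omega>)"
    by simp
qed

end
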